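(* Let $u^h$ be the solutions of the hybrid discrete problem and $u^*,u_*$ their upper and lower half-relaxed limits. Then at every regular point $x\in\Omega_r$, $u_*(x)=u^*(x)=u(x)$, and consequently $u_*$ and $u^*$ are viscosity solutions at $x$ of $\det D^2w=f$ together with $\max(-\lambda_1[w],0)=0$.
   Context: Setting. Let $n\ge 2$, $\Omega=(0,1)^n$, $f\in C(\overline\Omega)$ with $f>0$, and $g\in C(\partial\Omega)$ admitting a convex extension $\tilde g\in C(\overline\Omega)$. Let $u$ be the unique convex viscosity solution of $\det D^2u=f$ in $\Omega$, $u=g$ on $\partial\Omega$. Let $h>0$ with $1/h\in\mathbb Z$, $\mathbb Z_h=\{x\in\mathbb R^n: x_i/h\in\mathbb Z\ \forall i\}$, $\Omega^h=\overline\Omega\cap\mathbb Z_h$, $\Omega^h_0=\Omega\cap\mathbb Z_h$, $\partial\Omega^h=\Omega^h\setminus\Omega^h_0$; $r_h(v)$ is the restriction of a function $v$ to the grid. With $e^i$ the unit vectors, $\partial^i_+v^h(x)=(v^h(x+he^i)-v^h(x))/h$, $\partial^i_-v^h(x)=(v^h(x)-v^h(x-he^i))/h$, $D_hv^h=(\partial^i_+v^h)_i$, $\operatorname{div}_h(v^{h,i})_i=\sum_i\partial^i_-v^{h,i}$, and the discrete Hessian $\mathcal H_dv^h=(\partial^j_-\partial^i_+v^h)_{i,j}$. A point $x\in\Omega$ is regular if $u$ is $C^2$ in a neighborhood of $x$. Let $\Omega_r\subset\Omega$ be an open bounded convex set consisting of regular points. Put $\Omega_r^h=\overline{\Omega_r}\cap\mathbb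 Z_h$, let $\Omega^h_{r,0}$ be the set of $x\in\Omega_r^h$ at which $\mathcal H_dv^h(x)$ is defined using only values at points of $\Omega_r^h$, and $\Omega_s^h=\Omega^h_0\setminus\Omega^h_{r,0}$. Define $M_r[v^h]=\frac1n\operatorname{div}_h[(\operatorname{cof}\operatorname{sym}\mathcal H_dv^h)^TD_hv^h]$. For $x\in\Omega_0^h$ let $W_h(x)$ be the set of orthogonal bases $(\alpha_1,\dots,\alpha_n)$ of $\mathbb R^n$ with $x\pm\alpha_i\in\Omega^h$, and $M_s^+[v^h](x)=\inf_{W_h(x)}\prod_{i=1}^n\max\big(\frac{v^h(x+\alpha_i)-2v^h(x)+v^h(x-\alpha_i)}{|\alpha_i|^2},0\big)$. The hybrid operator is $F_h(v^h)(x)=M_s^+[v^h](x)-f(x)$ on $\Omega_s^h$ and $F_h(v^h)(x)=M_r[v^h](x)-f(x)$ on $\Omega^h_{r,0}$; the hybrid discrete problem is $F_h(u^h)=0$ on $\Omega^h_0$, $u^h=r_h(g)$ on $\partial\Omega^h$, and $u^h$ denotes its solution in $\{v^h: |v^h-r_h(u)|_{1,h}\le C_*h^{2+n/2},\ v^h=r_h(g)\text{ on }\partial\Omega^h,\ v^h=r_h(u)\text{ on }\Omega_r^h\setminus\Omega^h_{r,0}\}$ for a fixed constant $C_*$ and $h$ small, where $|v^h|_{1,h}=(h^n\sum_i\sum_{x\in\Omega^h_{r,0}}(\partial^i_+v^h(x))^2)^{1/2}$. The half-relaxed limits are $u^*(x)=\lim_{\delta\to0}\sup\{u^h(y): y\in\Omega^h_0,|y-x|\le\delta,0<h\le\delta\}$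 and $u_*(x)=\lim_{\delta\to0}\inf\{u^h(y): y\in\Omega^h_0,|y-x|\le\delta,0<h\le\delta\}$. $\lambda_1[w]$ denotes the smallest eigenvalue of the Hessian, understood in the viscosity sense. *)

theory Defs
  imports "HOL-Analysis.Analysis"
begin

definition Omega :: "(real^'n) set" where
  "Omega = {x. \<forall>i. 0 < x$i \<and> x$i < 1}"

text \<open>C2 test data on an open set S: Dphi is the gradient, Hphi the Hessian
  (Hphi y $ i $ j = second partial derivative in directions i then j), continuous.\<close>
definition C2_on :: "(real^'n) set \<Rightarrow> (real^'n \<Rightarrow> real) \<Rightarrow> (real^'n \<Rightarrow> real^'n)
                     \<Rightarrow> (real^'n \<Rightarrow> real^'n^'n) \<Rightarrow> bool" where
  "C2_on S phi Dphi Hphi \<longleftrightarrow> open S \<and>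
     (\<forall>y\<in>S. (phi has_derivative (\<lambda>v. Dphi y \<bullet> v)) (at y) \<and>
             (Dphi has_derivative (\<lambda>v. Hphi y *v v)) (at y)) \<and>
     continuous_on S Hphi"

definition psd :: "real^'n^'n \<Rightarrow> bool" where
  "psd A \<longleftrightarrow> (\<forall>v. 0 \<le> v \<bullet> (A *v v))"

definition lambda1 :: "real^'n^'n \<Rightarrow> real" where
  "lambda1 A = Min {l. \<exists>v. v \<noteq> 0 \<and> A *v v = l *\<^sub>R v}"

definition MA_visc_sub_at :: "(real^'n \<Rightarrow> real) \<Rightarrow> (real^'n \<Rightarrow> real) \<Rightarrow> real^'n \<Rightarrow> bool" where
  "MA_visc_sub_at f w x \<longleftrightarrow>
     (\<forall>S phi Dphi Hphi. x \<in> S \<and> C2_on S phi Dphi Hphi \<and> (\<forall>y\<in>S. w y - phi y \<le> w x - phi x)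
        \<longrightarrow> det (Hphi x) \<ge> f x)"

definition MA_visc_super_at :: "(real^'n \<Rightarrow> real) \<Rightarrow> (real^'n \<Rightarrow> real) \<Rightarrow> real^'n \<Rightarrow> bool" where
  "MA_visc_super_at f w x \<longleftrightarrow>
     (\<forall>S phi Dphi Hphi. x \<in> S \<and> C2_on S phi Dphi Hphi \<and> (\<forall>y\<in>S. w y - phi y \<ge> w x - phi x)
        \<and> psd (Hphi x) \<longrightarrow> det (Hphi x) \<le> f x)"

definition MA_visc_sol_at :: "(real^'n \<Rightarrow> real) \<Rightarrow> (real^'n \<Rightarrow> real) \<Rightarrow> real^'n \<Rightarrow> bool" where
  "MA_visc_sol_at f w x \<longleftrightarrow> MA_visc_sub_at f w x \<and> MA_visc_super_at f w x"

definition cvx_visc_sol_at :: "(real^'n \<Rightarrow> real) \<Rightarrow> real^'n \<Rightarrow> bool" where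
  "cvx_visc_sol_at w x \<longleftrightarrow>
     (\<forall>S phi Dphi Hphi. x \<in> S \<and> C2_on S phi Dphi Hphi \<and> (\<forall>y\<in>S. w y - phi y \<le> w x - phi x)
        \<longrightarrow> max (- lambda1 (Hphi x)) 0 \<le> 0) \<and>
     (\<forall>S phi Dphi Hphi. x \<in> S \<and> C2_on S phi Dphi Hphi \<and> (\<forall>y\<in>S. w y - phi y \<ge> w x - phi x)
        \<longrightarrow> max (- lambda1 (Hphi x)) 0 \<ge> 0)"

definition regular_point :: "(real^'n \<Rightarrow> real) \<Rightarrow> real^'n \<Rightarrow> bool" where
  "regular_point u x \<longleftrightarrow> x \<in> Omega \<and> (\<exists>S Du Hu. x \<in> S \<and> C2_on S u Du Hu)"

definition hN :: "nat \<Rightarrow> real" where "hN N = 1 / real N"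

definition grid :: "nat \<Rightarrow> (real^'n) set" where
  "grid N = {x. \<forall>i. \<exists>k::int. x$i = real_of_int k * hN N}"

definition Omh :: "nat \<Rightarrow> (real^'n) set" where "Omh N = closure Omega \<inter> grid N"
definition Omh0 :: "nat \<Rightarrow> (real^'n) set" where "Omh0 N = Omega \<inter> grid N"
definition bdh :: "nat \<Rightarrow> (real^'n) set" where "bdh N = Omh N - Omh0 N"

definition dplus :: "nat \<Rightarrow> 'n \<Rightarrow> (real^'n \<Rightarrow> real) \<Rightarrow> real^'n \<Rightarrow> real" where
  "dplus N i v x = (v (x + hN N *\<^sub>R axis i 1) - v x) / hN N"
definition dminus :: "nat \<Rightarrow> 'n \<Rightarrow> (real^'n \<Rightarrow> real) \<Rightarrow> real^'n \<Rightarrow> real" where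
  "dminus N i v x = (v x - v (x - hN N *\<^sub>R axis i 1)) / hN N"

definition Dh :: "nat \<Rightarrow> (real^'n \<Rightarrow> real) \<Rightarrow> real^'n \<Rightarrow> real^'n" where
  "Dh N v x = (\<chi> i. dplus N i v x)"

definition Hd :: "nat \<Rightarrow> (real^'n \<Rightarrow> real) \<Rightarrow> real^'n \<Rightarrow> real^'n^'n" where
  "Hd N v x = (\<chi> i j. dminus N j (dplus N i v) x)"

definition symm :: "real^'n^'n \<Rightarrow> real^'n^'n" where
  "symm A = (1/2) *\<^sub>R (A + transpose A)"

definition cof :: "real^'n^'n \<Rightarrow> real^'n^'n" where
  "cof A = (\<chi> i j. det (\<chi> k. if k = i then axis j 1 else A $ k))"

definition Mr :: "nat \<Rightarrow> (real^'n \<Rightarrow> real) \<Rightarrow> real^'n \<Rightarrow> real" where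
  "Mr N v x = (1 / real CARD('n)) *
     (\<Sum>i\<in>UNIV. dminus N i (\<lambda>y. (transpose (cof (symm (Hd N v y))) *v Dh N v y) $ i) x)"

definition Wh :: "nat \<Rightarrow> real^'n \<Rightarrow> ('n \<Rightarrow> real^'n) set" where
  "Wh N x = {a. (\<forall>i. a i \<noteq> 0) \<and> (\<forall>i j. i \<noteq> j \<longrightarrow> a i \<bullet> a j = 0) \<and>
                (\<forall>i. x + a i \<in> Omh N \<and> x - a i \<in> Omh N)}"

definition Ms_plus :: "nat \<Rightarrow> (real^'n \<Rightarrow> real) \<Rightarrow> real^'n \<Rightarrow> real" where
  "Ms_plus N v x = (INF a\<in>Wh N x. \<Prod>i\<in>UNIV.
       max ((v (x + a i) - 2 * v x + v (x - a i)) / (norm (a i))\<^sup>2) 0)"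

definition Omrh :: "nat \<Rightarrow> (real^'n) set \<Rightarrow> (real^'n) set" where
  "Omrh N Or = closure Or \<inter> grid N"

text \<open>Points where Hd v x only involves values at points of Omrh.\<close>
definition Omr0h :: "nat \<Rightarrow> (real^'n) set \<Rightarrow> (real^'n) set" where
  "Omr0h N Or = {x \<in> Omrh N Or. \<forall>i j.
      x + hN N *\<^sub>R axis i 1 \<in> Omrh N Or \<and> x - hN N *\<^sub>R axis j 1 \<in> Omrh N Or \<and>
      x + hN N *\<^sub>R axis i 1 - hN N *\<^sub>R axis j 1 \<in> Omrh N Or}"

definition Omsh :: "nat \<Rightarrow> (real^'n) set \<Rightarrow> (real^'n) set" where
  "Omsh N Or = Omh0 N - Omr0h N Or"

definition Fh :: "nat \<Rightarrow> (real^'n) set \<Rightarrow> (real^'n \<Rightarrow> real) \<Rightarrow> (real^'n \<Rightarrow> real) \<Rightarrow> real^'n \<Rightarrow> real" where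
  "Fh N Or f v x = (if x \<in> Omsh N Or then Ms_plus N v x - f x else Mr N v x - f x)"

definition norm1h :: "nat \<Rightarrow> (real^'n) set \<Rightarrow> (real^'n \<Rightarrow> real) \<Rightarrow> real" where
  "norm1h N Or v = sqrt (hN N ^ CARD('n) * (\<Sum>i\<in>UNIV. \<Sum>x\<in>Omr0h N Or. (dplus N i v x)\<^sup>2))"

text \<open>Upper / lower half-relaxed limits of the family U N (defined for N >= N0),
  the limit delta -> 0 of a monotone quantity being written as INF/SUP over delta > 0.\<close>
definition hrl_upper :: "nat \<Rightarrow> (nat \<Rightarrow> real^'n \<Rightarrow> real) \<Rightarrow> real^'n \<Rightarrow> ereal" where
  "hrl_upper N0 U x = (INF d\<in>{0<..}. SUP p\<in>{(N, y). N \<ge> N0 \<and> 0 < N \<and> hN N \<le> d \<and>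
       y \<in> Omh0 N \<and> dist y x \<le> d}. ereal (U (fst p) (snd p)))"

definition hrl_lower :: "nat \<Rightarrow> (nat \<Rightarrow> real^'n \<Rightarrow> real) \<Rightarrow> real^'n \<Rightarrow> ereal" where
  "hrl_lower N0 U x = (SUP d\<in>{0<..}. INF p\<in>{(N, y). N \<ge> N0 \<and> 0 < N \<and> hN N \<le> d \<and>
       y \<in> Omh0 N \<and> dist y x \<le> d}. ereal (U (fst p) (snd p)))"

end

theory Submission
  imports Defs
begin

(* Since only n/2 powers of h are lost when passing from the discrete H1
   norm to a single difference quotient, the forward differences of U N - u are O(h^2); walking
   along a coordinate line to the boundary layer (O(1/h) steps) gives a uniform O(h) bound on
   Or.  Hence both half-relaxed limits coincide with the continuous u on Or.

   The viscosity statements then follow from locality: a function equal to u on the open set Or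
   inherits at x in Or the viscosity solution property of u for det D^2 w = f, and, u being
   convex, it is midpoint convex near x, which forces every C2 function touching it from above
   to have a positive semidefinite, symmetric Hessian, i.e. lambda_1 >= 0. *)

lemma C2_line_deriv:
  assumes c2: "C2_on S phi Dphi Hphi" and y: "a + t *\<^sub>R v \<in> S"
  shows "((\<lambda>s. phi (a + s *\<^sub>R v)) has_real_derivative (Dphi (a + t *\<^sub>R v) \<bullet> v)) (at t)"
proof -
  have d: "(phi has_derivative (\<lambda>z. Dphi (a + t *\<^sub>R v) \<bullet> z)) (at (a + t *\<^sub>R v))"
    using c2 y unfolding C2_on_def by blast
  have l: "((\<lambda>s. a + s *\<^sub>R v) has_derivative (\<lambda>s. s *\<^sub>R v)) (at t)"
    by (auto intro!: derivative_eq_intros)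
  have "((\<lambda>s. phi (a + s *\<^sub>R v)) has_derivative (\<lambda>s. Dphi (a + t *\<^sub>R v) \<bullet> (s *\<^sub>R v))) (at t)"
    using has_derivative_compose[OF l d] by (simp add: o_def)
  then show ?thesis unfolding has_field_derivative_def
    by (simp add: inner_scaleR_right mult.commute[of _ "Dphi (a + t *\<^sub>R v) \<bullet> v"])
qed

lemma C2_line_deriv2:
  assumes c2: "C2_on S phi Dphi Hphi" and y: "a + t *\<^sub>R v \<in> S"
  shows "((\<lambda>s. Dphi (a + s *\<^sub>R v) \<bullet> w) has_real_derivative ((Hphi (a + t *\<^sub>R v) *v v) \<bullet> w)) (at t)"
proof -
  have d: "(Dphi has_derivative (\<lambda>z. Hphi (a + t *\<^sub>R v) *v z)) (at (a + t *\<^sub>R v))"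
    using c2 y unfolding C2_on_def by blast
  have l: "((\<lambda>s. a + s *\<^sub>R v) has_derivative (\<lambda>s. s *\<^sub>R v)) (at t)"
    by (auto intro!: derivative_eq_intros)
  have "((\<lambda>s. Dphi (a + s *\<^sub>R v)) has_derivative (\<lambda>s. Hphi (a + t *\<^sub>R v) *v (s *\<^sub>R v))) (at t)"
    using has_derivative_compose[OF l d] by (simp add: o_def)
  then have "((\<lambda>s. Dphi (a + s *\<^sub>R v) \<bullet> w) has_derivative
               (\<lambda>s. (Hphi (a + t *\<^sub>R v) *v (s *\<^sub>R v)) \<bullet> w)) (at t)"
    by (rule has_derivative_inner_left)
  then show ?thesis unfolding has_field_derivative_def
    by (simp add: matrix_vector_mult_scaleR mult.commute[of _ "(Hphi (a + t *\<^sub>R v) *v v) \<bullet> w"])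
qed

lemma C2_hessian_form_isCont:
  fixes Hphi :: "real^'n \<Rightarrow> real^'n^'n"
  assumes c2: "C2_on S phi Dphi Hphi" and y: "y \<in> S"
  shows "isCont (\<lambda>q. (Hphi q *v v) \<bullet> w) y"
proof -
  have "isCont Hphi y"
    using c2 y unfolding C2_on_def using continuous_on_eq_continuous_at by blast
  moreover have "linear (\<lambda>A::real^'n^'n. (A *v v) \<bullet> w)"
    by (rule linearI)
       (simp_all add: matrix_vector_mult_add_rdistrib inner_add_left flip: scaleR_matrix_vector_assoc)
  then have "isCont (\<lambda>A::real^'n^'n. (A *v v) \<bullet> w) (Hphi y)"
    using linear_continuous_at linear_conv_bounded_linear by blast
  ultimately show ?thesis
    using continuous_at_compose[of y Hphi "\<lambda>A. (A *v v) \<bullet> w"] by (simp add: o_def)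
qed

lemma C2_hessian_line_isCont:
  assumes c2: "C2_on S phi Dphi Hphi" and y: "a + t *\<^sub>R v \<in> S"
  shows "isCont (\<lambda>s. (Hphi (a + s *\<^sub>R v) *v v') \<bullet> w) t"
proof -
  have "isCont (\<lambda>s. a + s *\<^sub>R v) t" by (intro continuous_intros)
  then show ?thesis
    using continuous_at_compose[of t "\<lambda>s. a + s *\<^sub>R v" "\<lambda>q. (Hphi q *v v') \<bullet> w"]
      C2_hessian_form_isCont[OF c2 y] by (simp add: o_def)
qed

lemma second_difference_mvt:
  fixes g g' g'' :: "real \<Rightarrow> real"
  assumes t: "0 < t"
    and d1: "\<And>s. \<bar>s\<bar> \<le> t \<Longrightarrow> (g has_real_derivative g' s) (at s)"
    and d2: "\<And>s. \<bar>s\<bar> \<le> t \<Longrightarrow> (g' has_real_derivative g'' s) (at s)"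
  shows "\<exists>c \<xi>. 0 < c \<and> \<bar>\<xi>\<bar> < t \<and> g t + g (-t) - 2 * g 0 = c * g'' \<xi>"
proof -
  obtain a where a: "0 < a" "a < t" "g t - g 0 = (t - 0) * g' a"
    using MVT2[OF t, of g g'] d1 by auto
  obtain b where b: "-t < b" "b < 0" "g 0 - g (-t) = (0 - (-t)) * g' b"
    using MVT2[of "-t" 0 g g'] t d1 by auto
  obtain \<xi> where \<xi>: "b < \<xi>" "\<xi> < a" "g' a - g' b = (a - b) * g'' \<xi>"
    using MVT2[of b a g' g''] a b d2 by auto
  have "g t + g (-t) - 2 * g 0 = t * (g' a - g' b)"
    using a(3) b(3) by (simp add: algebra_simps)
  also have "\<dots> = (t * (a - b)) * g'' \<xi>" using \<xi>(3) by simp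
  finally show ?thesis using a b \<xi> t by (intro exI[of _ "t * (a - b)"] exI[of _ \<xi>]) auto
qed

lemma psd_hessian_from_second_differences:
  assumes c2: "C2_on S phi Dphi Hphi" and x: "x \<in> S" and rho: "\<rho> > 0"
    and sd: "\<And>z. norm z < \<rho> \<Longrightarrow> 0 \<le> phi (x + z) + phi (x - z) - 2 * phi x"
  shows "psd (Hphi x)"
  unfolding psd_def
proof
  fix v
  show "0 \<le> v \<bullet> (Hphi x *v v)"
  proof (rule ccontr)
    assume neg: "\<not> 0 \<le> v \<bullet> (Hphi x *v v)"
    define k where "k s = (Hphi (x + s *\<^sub>R v) *v v) \<bullet> v" for s
    have "k 0 < 0" using neg by (simp add: k_def inner_commute)
    moreover have "isCont k 0" unfolding k_def using C2_hessian_line_isCont[OF c2, of x 0 v] x by simp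
    ultimately obtain d where d0: "d > 0" and dk: "\<And>s. dist s 0 < d \<Longrightarrow> dist (k s) (k 0) < - k 0"
      unfolding continuous_at_eps_delta by (meson neg_0_less_iff_less)
    have d: "k s < 0" if "\<bar>s\<bar> < d" for s
      using dk[of s] that by (simp add: dist_real_def)
    obtain r where r: "r > 0" "ball x r \<subseteq> S" using c2 x unfolding C2_on_def by (meson openE)
    have nv: "norm v + 1 > 0" using norm_ge_zero[of v] by linarith
    define m where "m = (min r \<rho> / 2) / (norm v + 1)"
    have m0: "m > 0" unfolding m_def using r rho nv by simp
    define t where "t = min (d/2) m"
    have t0: "t > 0" using d0 m0 by (simp add: t_def)
    have "t * norm v \<le> m * (norm v + 1)"
      using m0 by (intro mult_mono) (auto simp: t_def)
    also have "\<dots> = min r \<rho> / 2" unfolding m_def using nv by (metis less_irrefl nonzero_eq_divide_eq)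
    finally have tv: "t * norm v < min r \<rho>" using r rho by simp
    have inS: "x + s *\<^sub>R v \<in> S" if "\<bar>s\<bar> \<le> t" for s
    proof -
      have "norm (s *\<^sub>R v) \<le> t * norm v" using that by (simp add: mult_right_mono)
      then show ?thesis using tv r(2) by (auto simp: dist_norm)
    qed
    obtain c \<xi> where c: "0 < c" "\<bar>\<xi>\<bar> < t"
      "phi (x + t *\<^sub>R v) + phi (x + (-t) *\<^sub>R v) - 2 * phi (x + 0 *\<^sub>R v) = c * k \<xi>"
      using second_difference_mvt[OF t0, of "\<lambda>s. phi (x + s *\<^sub>R v)" "\<lambda>s. Dphi (x + s *\<^sub>R v) \<bullet> v" k]
        C2_line_deriv[OF c2 inS] C2_line_deriv2[OF c2 inS] unfolding k_def by blast
    have "k \<xi> < 0" using d c(2) d0 by (simp add: t_def)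
    then have "phi (x + t *\<^sub>R v) + phi (x - t *\<^sub>R v) - 2 * phi x < 0"
      using c(1,3) by (simp add: mult_pos_neg)
    moreover have "norm (t *\<^sub>R v) < \<rho>" using tv t0 by simp
    ultimately show False using sd by fastforce
  qed
qed

lemma mixed_difference_mvt:
  assumes c2: "C2_on S phi Dphi Hphi" and t0: "0 < t"
    and box: "\<And>\<alpha> \<beta>. 0 \<le> \<alpha> \<Longrightarrow> \<alpha> \<le> t \<Longrightarrow> 0 \<le> \<beta> \<Longrightarrow> \<beta> \<le> t \<Longrightarrow> x + \<alpha> *\<^sub>R v + \<beta> *\<^sub>R w \<in> S"
  shows "\<exists>a b. 0 < a \<and> a < t \<and> 0 < b \<and> b < t \<and>
     phi (x + t *\<^sub>R v + t *\<^sub>R w) - phi (x + t *\<^sub>R v) - phi (x + t *\<^sub>R w) + phi x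
       = t * t * ((Hphi (x + a *\<^sub>R v + b *\<^sub>R w) *v w) \<bullet> v)"
proof -
  have der: "((\<lambda>s. phi ((x + t *\<^sub>R w) + s *\<^sub>R v) - phi (x + s *\<^sub>R v)) has_real_derivative
       (Dphi ((x + t *\<^sub>R w) + s *\<^sub>R v) \<bullet> v - Dphi (x + s *\<^sub>R v) \<bullet> v)) (at s)"
    if "0 \<le> s" "s \<le> t" for s
  proof -
    have "(x + t *\<^sub>R w) + s *\<^sub>R v \<in> S" using box[of s t] that t0 by (simp add: algebra_simps)
    moreover have "x + s *\<^sub>R v \<in> S" using box[of s 0] that t0 by simp
    ultimately show ?thesis using DERIV_diff C2_line_deriv[OF c2] by blast
  qed
  obtain a where a: "0 < a" "a < t"
    "(phi ((x + t *\<^sub>R w) + t *\<^sub>R v) - phi (x + t *\<^sub>R v)) - (phi ((x + t *\<^sub>R w) + 0 *\<^sub>R v) - phi (x + 0 *\<^sub>R v))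
      = (t - 0) * (Dphi ((x + t *\<^sub>R w) + a *\<^sub>R v) \<bullet> v - Dphi (x + a *\<^sub>R v) \<bullet> v)"
    using MVT2[OF t0 der] by blast
  have der2: "((\<lambda>s. Dphi ((x + a *\<^sub>R v) + s *\<^sub>R w) \<bullet> v) has_real_derivative
       ((Hphi ((x + a *\<^sub>R v) + s *\<^sub>R w) *v w) \<bullet> v)) (at s)" if "0 \<le> s" "s \<le> t" for s
    using C2_line_deriv2[OF c2] box[of a s] that a by simp
  obtain b where b: "0 < b" "b < t"
    "Dphi ((x + a *\<^sub>R v) + t *\<^sub>R w) \<bullet> v - Dphi ((x + a *\<^sub>R v) + 0 *\<^sub>R w) \<bullet> v
      = (t - 0) * ((Hphi ((x + a *\<^sub>R v) + b *\<^sub>R w) *v w) \<bullet> v)"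
    using MVT2[OF t0 der2] by blast
  have e1: "(x + t *\<^sub>R w) + a *\<^sub>R v = (x + a *\<^sub>R v) + t *\<^sub>R w"
    and e2: "(x + t *\<^sub>R w) + t *\<^sub>R v = x + t *\<^sub>R v + t *\<^sub>R w" by (simp_all add: algebra_simps)
  have "phi (x + t *\<^sub>R v + t *\<^sub>R w) - phi (x + t *\<^sub>R v) - phi (x + t *\<^sub>R w) + phi x
       = t * t * ((Hphi (x + a *\<^sub>R v + b *\<^sub>R w) *v w) \<bullet> v)"
    using a(3)[unfolded e1 e2] b(3) by (simp add: mult.assoc)
  then show ?thesis using a b by blast
qed

lemma mixed_difference_tendsto:
  assumes c2: "C2_on S phi Dphi Hphi" and x: "x \<in> S"
  shows "((\<lambda>t. (phi (x + t *\<^sub>R v + t *\<^sub>R w) - phi (x + t *\<^sub>R v) - phi (x + t *\<^sub>R w) + phi x)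
                 / (t * t)) \<longlongrightarrow> (Hphi x *v w) \<bullet> v) (at_right 0)"
proof (rule tendstoI)
  fix e :: real assume e: "e > 0"
  define P where "P q = (Hphi q *v w) \<bullet> v" for q
  obtain d1 where d1: "d1 > 0" "\<And>q. dist q x < d1 \<Longrightarrow> dist (P q) (P x) < e"
    using C2_hessian_form_isCont[OF c2 x, of w v] e unfolding continuous_at_eps_delta P_def by blast
  obtain r where r: "r > 0" "ball x r \<subseteq> S" using c2 x unfolding C2_on_def by (meson openE)
  define D where "D = min r d1"
  have nvw: "norm v + norm w + 1 > 0" using norm_ge_zero[of v] norm_ge_zero[of w] by linarith
  define t0 where "t0 = D / (norm v + norm w + 1)"
  have t00: "t0 > 0" using r d1 nvw by (simp add: t0_def D_def)
  have near: "dist (x + \<alpha> *\<^sub>R v + \<beta> *\<^sub>R w) x < D"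
    if "0 \<le> \<alpha>" "\<alpha> \<le> t" "0 \<le> \<beta>" "\<beta> \<le> t" "t < t0" for \<alpha> \<beta> t
  proof -
    have "dist (x + \<alpha> *\<^sub>R v + \<beta> *\<^sub>R w) x \<le> \<alpha> * norm v + \<beta> * norm w"
      using that norm_triangle_ineq[of "\<alpha> *\<^sub>R v" "\<beta> *\<^sub>R w"] by (simp add: dist_norm add.assoc)
    also have "\<dots> \<le> t * (norm v + norm w + 1)"
    proof -
      have "\<alpha> * norm v \<le> t * norm v" "\<beta> * norm w \<le> t * norm w"
        using that by (simp_all add: mult_right_mono)
      then show ?thesis using that by (simp add: distrib_left)
    qed
    also have "\<dots> < t0 * (norm v + norm w + 1)" using that nvw by simp
    also have "\<dots> = D" unfolding t0_def using nvw by simp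
    finally show ?thesis .
  qed
  have "\<forall>t. 0 < t \<longrightarrow> t < t0 \<longrightarrow>
    dist ((phi (x + t *\<^sub>R v + t *\<^sub>R w) - phi (x + t *\<^sub>R v) - phi (x + t *\<^sub>R w) + phi x) / (t * t))
         ((Hphi x *v w) \<bullet> v) < e"
  proof (intro allI impI)
    fix t :: real assume t: "0 < t" "t < t0"
    have "x + \<alpha> *\<^sub>R v + \<beta> *\<^sub>R w \<in> S" if "0 \<le> \<alpha>" "\<alpha> \<le> t" "0 \<le> \<beta>" "\<beta> \<le> t" for \<alpha> \<beta>
      using near[OF that t(2)] r(2) by (auto simp: D_def dist_commute)
    then obtain a b where ab: "0 < a" "a < t" "0 < b" "b < t"
      "phi (x + t *\<^sub>R v + t *\<^sub>R w) - phi (x + t *\<^sub>R v) - phi (x + t *\<^sub>R w) + phi x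
         = t * t * P (x + a *\<^sub>R v + b *\<^sub>R w)"
      using mixed_difference_mvt[OF c2 t(1)] unfolding P_def by blast
    have "dist (x + a *\<^sub>R v + b *\<^sub>R w) x < d1" using near[of a t b] ab t by (simp add: D_def)
    then show "dist ((phi (x + t *\<^sub>R v + t *\<^sub>R w) - phi (x + t *\<^sub>R v) - phi (x + t *\<^sub>R w) + phi x)
                / (t * t)) ((Hphi x *v w) \<bullet> v) < e"
      using d1(2) ab(5) t(1) by (simp add: P_def)
  qed
  then show "\<forall>\<^sub>F t in at_right 0.
    dist ((phi (x + t *\<^sub>R v + t *\<^sub>R w) - phi (x + t *\<^sub>R v) - phi (x + t *\<^sub>R w) + phi x) / (t * t))
         ((Hphi x *v w) \<bullet> v) < e"
    using t00 eventually_at_right[of 0 t0] by blast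
qed

text \<open>Schwarz's theorem: the Hessian of a C2 function is a symmetric matrix, since the mixed
  difference quotient is symmetric in v and w.\<close>

lemma C2_hessian_symmetric:
  assumes c2: "C2_on S phi Dphi Hphi" and x: "x \<in> S"
  shows "(Hphi x *v v) \<bullet> w = v \<bullet> (Hphi x *v w)"
proof -
  have swap: "x + t *\<^sub>R w + t *\<^sub>R v = x + t *\<^sub>R v + t *\<^sub>R w" for t by (simp add: algebra_simps)
  have "((\<lambda>t. (phi (x + t *\<^sub>R v + t *\<^sub>R w) - phi (x + t *\<^sub>R v) - phi (x + t *\<^sub>R w) + phi x)
                 / (t * t)) \<longlongrightarrow> (Hphi x *v v) \<bullet> w) (at_right 0)"
    using mixed_difference_tendsto[OF c2 x, of w v] unfolding swap by (simp add: algebra_simps)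
  with mixed_difference_tendsto[OF c2 x, of v w]
  have "(Hphi x *v w) \<bullet> v = (Hphi x *v v) \<bullet> w"
    using tendsto_unique[OF trivial_limit_at_right_real] by blast
  then show ?thesis by (simp add: inner_commute)
qed

text \<open>For a symmetric positive semidefinite matrix, a zero of the quadratic form lies in the
  kernel: otherwise the form would become negative along v0 - t B v0 for small t > 0.\<close>

lemma psd_quadratic_zero_imp_kernel:
  fixes B :: "real^'n^'n"
  assumes symB: "\<And>v w. (B *v v) \<bullet> w = v \<bullet> (B *v w)" and psdB: "psd B"
    and zero: "v0 \<bullet> (B *v v0) = 0"
  shows "B *v v0 = 0"
proof -
  let ?w = "B *v v0"
  define c where "c = ?w \<bullet> (B *v ?w)"
  have c0: "c \<ge> 0" using psdB unfolding psd_def c_def by blast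
  have quad: "0 \<le> - 2 * t * (?w \<bullet> ?w) + t^2 * c" for t
  proof -
    have "0 \<le> (v0 - t *\<^sub>R ?w) \<bullet> (B *v (v0 - t *\<^sub>R ?w))" using psdB unfolding psd_def by blast
    also have "\<dots> = (v0 - t *\<^sub>R ?w) \<bullet> (?w - t *\<^sub>R (B *v ?w))"
      by (simp add: matrix_vector_mult_diff_distrib matrix_vector_mult_scaleR)
    also have "\<dots> = v0 \<bullet> ?w - t * (v0 \<bullet> (B *v ?w)) - t * (?w \<bullet> ?w) + t^2 * c"
      by (simp add: c_def inner_diff_left inner_diff_right power2_eq_square right_diff_distrib)
    also have "\<dots> = - 2 * t * (?w \<bullet> ?w) + t^2 * c"
      using zero symB[of v0 ?w] by (simp add: inner_commute)
    finally show ?thesis .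
  qed
  have "?w \<bullet> ?w = 0"
  proof (rule ccontr)
    define s where "s = ?w \<bullet> ?w"
    assume "?w \<bullet> ?w \<noteq> 0"
    then have s0: "s > 0" by (simp add: s_def)
    define t where "t = s / (c + 1)"
    have t0: "t > 0" using s0 c0 by (simp add: t_def)
    have "t * c < s" unfolding t_def using s0 c0 by (simp add: field_simps)
    moreover have "0 \<le> t * (- 2 * s + t * c)"
      using quad[of t] unfolding s_def[symmetric] by (simp add: power2_eq_square algebra_simps)
    then have "0 \<le> - 2 * s + t * c" using t0 by (simp add: zero_le_mult_iff)
    ultimately show False using s0 by linarith
  qed
  then show ?thesis by simp
qed


text \<open>A symmetric matrix has a real eigenvector: a minimiser of its quadratic form on the unit
  sphere, with eigenvalue the minimum value.\<close>

lemma symmetric_eigenvector_exists: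
  fixes A :: "real^'n^'n"
  assumes symA: "\<And>v w. (A *v v) \<bullet> w = v \<bullet> (A *v w)"
  shows "\<exists>v l. v \<noteq> 0 \<and> A *v v = l *\<^sub>R v"
proof -
  let ?q = "\<lambda>v. v \<bullet> (A *v v)"
  have "continuous_on (sphere 0 1) ?q"
    by (intro continuous_intros linear_continuous_on matrix_vector_mul_linear)
  then obtain v0 where v0: "norm v0 = 1" and mn: "\<And>y. norm y = 1 \<Longrightarrow> ?q v0 \<le> ?q y"
    using continuous_attains_inf[OF compact_sphere, of 0 1 ?q] by auto
  define B where "B = A - ?q v0 *\<^sub>R mat 1"
  have Bv: "B *v v = A *v v - ?q v0 *\<^sub>R v" for v
    by (simp add: B_def matrix_vector_mult_diff_rdistrib flip: scaleR_matrix_vector_assoc)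
  have "0 \<le> w \<bullet> (B *v w)" for w
  proof (cases "w = 0")
    case False
    have "?q v0 \<le> ?q ((1 / norm w) *\<^sub>R w)" by (rule mn) (use False in simp)
    also have "\<dots> = (1 / norm w)^2 * ?q w"
      by (simp add: matrix_vector_mult_scaleR inner_scaleR_left inner_scaleR_right power2_eq_square)
    finally have "?q v0 * (w \<bullet> w) \<le> ?q w"
      using False by (simp add: field_simps power2_norm_eq_inner)
    then show ?thesis by (simp add: Bv inner_diff_right)
  qed (simp add: Bv)
  then have psdB: "psd B" unfolding psd_def by blast
  have "(B *v v) \<bullet> w = v \<bullet> (B *v w)" for v w
    using symA[of v w] by (simp add: Bv inner_diff_left inner_diff_right inner_commute)
  moreover note psdB
  moreover have "v0 \<bullet> (B *v v0) = 0"
    using v0 by (simp add: Bv inner_diff_right power2_norm_eq_inner[symmetric])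
  ultimately have "B *v v0 = 0" by (rule psd_quadratic_zero_imp_kernel)
  then have "A *v v0 = ?q v0 *\<^sub>R v0" by (simp add: Bv)
  moreover have "v0 \<noteq> 0" using v0 by auto
  ultimately show ?thesis by blast
qed

text \<open>A symmetric matrix has finitely many eigenvalues: eigenvectors for distinct eigenvalues
  are orthogonal, hence independent, so there are at most n of them.\<close>

lemma symmetric_eigenvalues_finite:
  fixes A :: "real^'n^'n"
  assumes symA: "\<And>v w. (A *v v) \<bullet> w = v \<bullet> (A *v w)"
  shows "finite {l. \<exists>v. v \<noteq> 0 \<and> A *v v = l *\<^sub>R v}"
proof (rule ccontr)
  let ?E = "{l. \<exists>v. v \<noteq> 0 \<and> A *v v = l *\<^sub>R v}"
  assume "\<not> finite ?E"
  then obtain F where F: "finite F" "card F = Suc DIM(real^'n)" "F \<subseteq> ?E"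
    using infinite_arbitrarily_large by blast
  then have "\<forall>l\<in>F. \<exists>v. v \<noteq> 0 \<and> A *v v = l *\<^sub>R v" by blast
  then have "\<exists>ev. \<forall>l\<in>F. ev l \<noteq> 0 \<and> A *v ev l = l *\<^sub>R ev l" by (rule bchoice)
  then obtain ev where ev: "\<And>l. l \<in> F \<Longrightarrow> ev l \<noteq> 0 \<and> A *v ev l = l *\<^sub>R ev l" by blast
  have inj: "inj_on ev F"
  proof (rule inj_onI)
    fix a b assume a: "a \<in> F" and b: "b \<in> F" and e: "ev a = ev b"
    have "a *\<^sub>R ev a = A *v ev a" using ev[OF a] by simp
    also have "\<dots> = b *\<^sub>R ev a" using ev[OF b] e by simp
    finally have "a *\<^sub>R ev a = b *\<^sub>R ev a" .
    then show "a = b" using ev[OF a] by (simp add: scaleR_cancel_right)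
  qed
  have "pairwise orthogonal (ev ` F)"
    unfolding pairwise_def
  proof (clarify)
    fix a b assume a: "a \<in> F" and b: "b \<in> F" and ne: "ev a \<noteq> ev b"
    have "(A *v ev a) \<bullet> ev b = ev a \<bullet> (A *v ev b)" by (rule symA)
    then have "a * (ev a \<bullet> ev b) = b * (ev a \<bullet> ev b)" using ev[OF a] ev[OF b] by simp
    moreover have "a \<noteq> b" using ne by auto
    ultimately show "orthogonal (ev a) (ev b)" unfolding orthogonal_def by simp
  qed
  moreover have "0 \<notin> ev ` F" using ev by auto
  ultimately have "independent (ev ` F)" using pairwise_orthogonal_independent by blast
  then have "card (ev ` F) \<le> DIM(real^'n)" using independent_bound by blast
  then show False using card_image[OF inj] F(2) by simp
qed

text \<open>Hence lambda1 of a symmetric positive semidefinite matrix is a genuine minimum of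
  nonnegative eigenvalues.\<close>

lemma lambda1_nonneg:
  fixes A :: "real^'n^'n"
  assumes symA: "\<And>v w. (A *v v) \<bullet> w = v \<bullet> (A *v w)" and psdA: "psd A"
  shows "lambda1 A \<ge> 0"
proof -
  let ?E = "{l. \<exists>v. v \<noteq> 0 \<and> A *v v = l *\<^sub>R v}"
  have "l \<ge> 0" if "l \<in> ?E" for l
  proof -
    obtain v where v: "v \<noteq> 0" "A *v v = l *\<^sub>R v" using \<open>l \<in> ?E\<close> by blast
    have "0 \<le> v \<bullet> (A *v v)" using psdA unfolding psd_def by blast
    then have "0 \<le> l * (v \<bullet> v)" using v by simp
    moreover have "v \<bullet> v > 0" using v(1) by simp
    ultimately show "l \<ge> 0" by (simp add: zero_le_mult_iff)
  qed
  moreover have "?E \<noteq> {}" using symmetric_eigenvector_exists[OF symA] by blast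
  ultimately show ?thesis
    unfolding lambda1_def using symmetric_eigenvalues_finite[OF symA] by simp
qed

lemma C2_on_restrict: "C2_on S phi Dphi Hphi \<Longrightarrow> open T \<Longrightarrow> C2_on (S \<inter> T) phi Dphi Hphi"
  unfolding C2_on_def by (auto intro: continuous_on_subset)

text \<open>Being a viscosity solution of det D^2 w = f at x only depends on w near x: test functions
  may be restricted to any open neighbourhood of x.\<close>

lemma MA_visc_sol_at_local:
  assumes Or_open: "open Or" and x: "x \<in> Or" and wu: "\<forall>y\<in>Or. w y = u y"
    and uv: "MA_visc_sol_at f u x"
  shows "MA_visc_sol_at f w x"
  unfolding MA_visc_sol_at_def MA_visc_sub_at_def MA_visc_super_at_def
proof (intro conjI allI impI; elim conjE)
  fix S phi Dphi Hphi
  assume "x \<in> S" and c2: "C2_on S phi Dphi Hphi" and mx: "\<forall>y\<in>S. w y - phi y \<le> w x - phi x"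
  then have "x \<in> S \<inter> Or" and "\<forall>y\<in>S \<inter> Or. u y - phi y \<le> u x - phi x" using x wu by auto
  with C2_on_restrict[OF c2 Or_open] show "f x \<le> det (Hphi x)"
    using uv unfolding MA_visc_sol_at_def MA_visc_sub_at_def by blast
next
  fix S phi Dphi Hphi
  assume "x \<in> S" and c2: "C2_on S phi Dphi Hphi" and mx: "\<forall>y\<in>S. w x - phi x \<le> w y - phi y"
    and p: "psd (Hphi x)"
  then have "x \<in> S \<inter> Or" and "\<forall>y\<in>S \<inter> Or. u x - phi x \<le> u y - phi y" using x wu by auto
  with C2_on_restrict[OF c2 Or_open] p show "det (Hphi x) \<le> f x"
    using uv unfolding MA_visc_sol_at_def MA_visc_super_at_def by blast
qed

lemma midpoint_convex_near:
  assumes conv: "convex_on C u" and Or_open: "open Or" and Or_sub: "Or \<subseteq> C"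
    and x: "x \<in> Or" and wu: "\<forall>y\<in>Or. w y = u y"
  shows "\<exists>\<rho>>0. \<forall>z. norm z < \<rho> \<longrightarrow> 2 * w x \<le> w (x + z) + w (x - z)"
proof -
  obtain \<rho> where \<rho>: "\<rho> > 0" "ball x \<rho> \<subseteq> Or" using Or_open x openE by blast
  have "2 * w x \<le> w (x + z) + w (x - z)" if z: "norm z < \<rho>" for z
  proof -
    have p: "x + z \<in> Or" "x - z \<in> Or" using z \<rho> by (auto simp: dist_norm)
    have mid: "x = (1 - 1/2) *\<^sub>R (x + z) + (1/2::real) *\<^sub>R (x - z)"
      by (simp add: algebra_simps flip: scaleR_2)
    have "u x \<le> (1 - 1/2) * u (x + z) + (1/2) * u (x - z)"
      using convex_onD[OF conv, of "1/2" "x + z" "x - z"] p Or_sub mid by auto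
    then show ?thesis using wu p x by simp
  qed
  then show ?thesis using \<rho>(1) by blast
qed

text \<open>A function that is midpoint convex around x is a viscosity solution at x of
  max(-lambda_1[w], 0) = 0: a C2 function touching it from above has nonnegative second
  differences, hence a psd (and symmetric) Hessian with nonnegative smallest eigenvalue.\<close>

lemma cvx_visc_sol_at_midpoint_convex:
  assumes \<rho>: "\<rho> > 0" and mc: "\<forall>z. norm z < \<rho> \<longrightarrow> 2 * w x \<le> w (x + z) + w (x - z)"
  shows "cvx_visc_sol_at w x"
  unfolding cvx_visc_sol_at_def
proof (intro conjI allI impI; elim conjE)
  fix S phi Dphi Hphi
  assume xS: "x \<in> S" and c2: "C2_on S phi Dphi Hphi" and mx: "\<forall>y\<in>S. w y - phi y \<le> w x - phi x"
  obtain r where r: "r > 0" "ball x r \<subseteq> S" using c2 xS unfolding C2_on_def by (meson openE)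
  have "0 \<le> phi (x + z) + phi (x - z) - 2 * phi x" if z: "norm z < min r \<rho>" for z
  proof -
    have "x + z \<in> S" "x - z \<in> S" using z r by (auto simp: dist_norm)
    then have "w (x + z) - phi (x + z) \<le> w x - phi x" "w (x - z) - phi (x - z) \<le> w x - phi x"
      using mx by auto
    moreover have "2 * w x \<le> w (x + z) + w (x - z)" using mc z by simp
    ultimately show ?thesis by linarith
  qed
  then have "psd (Hphi x)"
    using psd_hessian_from_second_differences[OF c2 xS, of "min r \<rho>"] r(1) \<rho> by simp
  then have "lambda1 (Hphi x) \<ge> 0" using lambda1_nonneg C2_hessian_symmetric[OF c2 xS] by blast
  then show "max (- lambda1 (Hphi x)) 0 \<le> 0" by simp
qed simp

lemma hN_pos: "N > 0 \<Longrightarrow> hN N > 0"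
  by (simp add: hN_def)

text \<open>A bounded set contains only finitely many grid points: each coordinate of such a
  point is an integer multiple of 1/N in a bounded range.\<close>

lemma finite_grid_bounded:
  assumes b: "bounded B" and N: "N > 0"
  shows "finite (B \<inter> (grid N :: (real^'n) set))"
proof -
  obtain b where bb: "\<And>x. x \<in> B \<Longrightarrow> norm x \<le> b" using b bounded_pos by blast
  define K where "K = \<lceil>b * real N\<rceil>"
  define g where "g k = (\<chi> i. real_of_int (k i) * hN N)" for k :: "'n \<Rightarrow> int"
  have "B \<inter> grid N \<subseteq> g ` (PiE UNIV (\<lambda>_. {-K..K}))"
  proof
    fix y :: "real^'n" assume y: "y \<in> B \<inter> grid N"
    define k where "k i = \<lfloor>y$i * real N\<rfloor>" for i
    have yk: "y$i = real_of_int (k i) * hN N" and kK: "k i \<in> {-K..K}" for i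
    proof -
      obtain m where m: "y$i = real_of_int m * hN N" using y unfolding grid_def by blast
      then have ym: "y$i * real N = real_of_int m" using N by (simp add: hN_def)
      then have ki: "k i = m" unfolding k_def by simp
      then show "y$i = real_of_int (k i) * hN N" using m by simp
      have "\<bar>y$i\<bar> \<le> b" using bb y component_le_norm_cart[of y i] by force
      then have "\<bar>real_of_int m\<bar> \<le> b * real N"
        unfolding ym[symmetric] using N by (simp add: abs_mult mult_right_mono)
      then have "\<bar>m\<bar> \<le> K" unfolding K_def by linarith
      then show "k i \<in> {-K..K}" using ki by (auto simp: abs_le_iff)
    qed
    have "y = g k" unfolding g_def by (simp add: vec_eq_iff yk)
    moreover have "k \<in> PiE UNIV (\<lambda>_. {-K..K})" using kK by auto
    ultimately show "y \<in> g ` (PiE UNIV (\<lambda>_. {-K..K}))" by blast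
  qed
  moreover have "finite (PiE (UNIV::'n set) (\<lambda>_. {-K..K}))" by (intro finite_PiE) auto
  ultimately show ?thesis using finite_subset by blast
qed

text \<open>Every point x has a grid point within distance n/N (round each coordinate down).\<close>

lemma grid_point_near:
  fixes x :: "real^'n"
  assumes N: "N > 0"
  shows "\<exists>y\<in>grid N. dist y x \<le> real CARD('n) / real N"
proof
  define y where "y = (\<chi> i. real_of_int \<lfloor>x$i * real N\<rfloor> * hN N)"
  show "y \<in> grid N" unfolding grid_def y_def by auto
  have c: "\<bar>(y - x)$i\<bar> \<le> 1 / real N" for i
  proof -
    have a: "real_of_int \<lfloor>x$i * real N\<rfloor> \<le> x$i * real N" by simp
    have b: "x$i * real N - 1 < real_of_int \<lfloor>x$i * real N\<rfloor>" by linarith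
    have "y$i = real_of_int \<lfloor>x$i * real N\<rfloor> / real N" by (simp add: y_def hN_def)
    then show ?thesis using a b N by (simp add: field_simps abs_le_iff) linarith
  qed
  have "dist y x \<le> (\<Sum>i\<in>UNIV. \<bar>(y - x)$i\<bar>)" unfolding dist_norm by (rule norm_le_l1_cart)
  also have "\<dots> \<le> (\<Sum>i\<in>(UNIV::'n set). 1 / real N)" by (intro sum_mono c)
  finally show "dist y x \<le> real CARD('n) / real N" by simp
qed

lemma norm1h_radicand_nonneg:
  fixes v :: "real^'n \<Rightarrow> real"
  assumes N: "N > 0"
  shows "0 \<le> hN N ^ CARD('n) * (\<Sum>i\<in>UNIV. \<Sum>x\<in>Omr0h N Or. (dplus N i v x)\<^sup>2)"
  using hN_pos[OF N] by (intro mult_nonneg_nonneg sum_nonneg) auto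

lemma dplus_sq_le_norm1h:
  fixes v :: "real^'n \<Rightarrow> real"
  assumes N: "N > 0" and b: "bounded Or" and z: "z \<in> Omr0h N Or"
  shows "hN N ^ CARD('n) * (dplus N i v z)\<^sup>2 \<le> (norm1h N Or v)\<^sup>2"
proof -
  have "Omr0h N Or \<subseteq> closure Or \<inter> grid N" unfolding Omr0h_def Omrh_def by auto
  then have fin: "finite (Omr0h N Or)"
    using finite_grid_bounded[OF bounded_closure[OF b] N] finite_subset by blast
  define T where "T = (\<Sum>i\<in>UNIV. \<Sum>x\<in>Omr0h N Or. (dplus N i v x)\<^sup>2)"
  have "(dplus N i v z)\<^sup>2 \<le> (\<Sum>x\<in>Omr0h N Or. (dplus N i v x)\<^sup>2)"
    using member_le_sum[OF z, of "\<lambda>x. (dplus N i v x)\<^sup>2"] fin by simp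
  also have "\<dots> \<le> T" unfolding T_def
    by (rule member_le_sum[of i UNIV "\<lambda>i. \<Sum>x\<in>Omr0h N Or. (dplus N i v x)\<^sup>2"])
       (auto intro: sum_nonneg)
  finally have "hN N ^ CARD('n) * (dplus N i v z)\<^sup>2 \<le> hN N ^ CARD('n) * T"
    using hN_pos[OF N] by (simp add: mult_left_mono)
  also have "\<dots> = (norm1h N Or v)\<^sup>2"
    unfolding norm1h_def T_def by (rule real_sqrt_pow2[symmetric]) (rule norm1h_radicand_nonneg[OF N])
  finally show ?thesis .
qed

lemma dplus_bound:
  fixes v :: "real^'n \<Rightarrow> real"
  assumes N: "N > 0" and b: "bounded Or"
    and nb: "norm1h N Or v \<le> Cs * hN N powr (2 + real CARD('n) / 2)"
    and z: "z \<in> Omr0h N Or"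
  shows "\<bar>dplus N i v z\<bar> \<le> \<bar>Cs\<bar> * hN N ^ 2"
proof -
  define h where "h = hN N"
  have h0: "h > 0" using hN_pos[OF N] by (simp add: h_def)
  have "0 \<le> norm1h N Or v" unfolding norm1h_def using norm1h_radicand_nonneg[OF N] by simp
  then have "(norm1h N Or v)\<^sup>2 \<le> (Cs * h powr (2 + real CARD('n) / 2))\<^sup>2"
    using nb by (simp add: h_def power_mono)
  also have "\<dots> = Cs\<^sup>2 * (h powr (2 + real CARD('n) / 2) * h powr (2 + real CARD('n) / 2))"
    by (simp add: power2_eq_square)
  also have "h powr (2 + real CARD('n) / 2) * h powr (2 + real CARD('n) / 2) = h ^ CARD('n) * h ^ 4"
    unfolding powr_add[symmetric] using powr_realpow[OF h0, of "CARD('n) + 4"]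
    by (simp add: power_add add.commute)
  finally have "h ^ CARD('n) * (dplus N i v z)\<^sup>2 \<le> h ^ CARD('n) * (Cs\<^sup>2 * h ^ 4)"
    using dplus_sq_le_norm1h[OF N b z, of i v] by (simp add: h_def algebra_simps)
  then have "(dplus N i v z)\<^sup>2 \<le> (\<bar>Cs\<bar> * h\<^sup>2)\<^sup>2"
    using h0 by (simp add: power_mult_distrib flip: power_mult)
  then have "\<bar>dplus N i v z\<bar> \<le> \<bar>\<bar>Cs\<bar> * h\<^sup>2\<bar>" using abs_le_square_iff by blast
  then show ?thesis by (simp add: h_def)
qed

lemma walk_bound:
  fixes v :: "real^'n \<Rightarrow> real"
  assumes N: "N > 0"
    and bd: "\<forall>y\<in>Omrh N Or - Omr0h N Or. v y = 0"
    and dp: "\<forall>z\<in>Omr0h N Or. \<bar>dplus N i v z\<bar> \<le> c"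
    and R: "\<forall>y\<in>closure Or. norm y \<le> R" and c0: "c \<ge> 0"
  shows "\<forall>y\<in>Omrh N Or. y$i + real k * hN N > R \<longrightarrow> \<bar>v y\<bar> \<le> real k * (c * hN N)"
proof (induction k)
  case 0
  show ?case
  proof (intro ballI impI)
    fix y assume y: "y \<in> Omrh N Or" and g: "y$i + real 0 * hN N > R"
    have "y$i \<le> norm y" using component_le_norm_cart[of y i] by linarith
    also have "norm y \<le> R" using R y unfolding Omrh_def by blast
    finally show "\<bar>v y\<bar> \<le> real 0 * (c * hN N)" using g by simp
  qed
next
  case (Suc k)
  show ?case
  proof (intro ballI impI)
    fix y assume y: "y \<in> Omrh N Or" and g: "y$i + real (Suc k) * hN N > R"
    have h0: "hN N > 0" using hN_pos[OF N] .
    show "\<bar>v y\<bar> \<le> real (Suc k) * (c * hN N)"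
    proof (cases "y \<in> Omr0h N Or")
      case False
      then show ?thesis using bd y h0 c0 by simp
    next
      case True
      define y' where "y' = y + hN N *\<^sub>R axis i 1"
      have y': "y' \<in> Omrh N Or" using True unfolding Omr0h_def y'_def by blast
      have "y'$i + real k * hN N > R" using g by (simp add: y'_def axis_def algebra_simps)
      then have IH: "\<bar>v y'\<bar> \<le> real k * (c * hN N)" using Suc.IH y' by blast
      have "\<bar>(v y' - v y) / hN N\<bar> \<le> c" using dp True unfolding dplus_def y'_def by blast
      then have "\<bar>v y' - v y\<bar> \<le> c * hN N" using h0 by (simp add: abs_div divide_le_eq)
      then show ?thesis using IH by (simp add: algebra_simps)
    qed
  qed
qed

text \<open>Discrete Poincare-type sup bound: walking at most (2R + h)/h steps crosses the region.\<close>

lemma discrete_sup_bound: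
  fixes v :: "real^'n \<Rightarrow> real"
  assumes N: "N > 0"
    and bd: "\<forall>y\<in>Omrh N Or - Omr0h N Or. v y = 0"
    and dp: "\<forall>z\<in>Omr0h N Or. \<bar>dplus N i v z\<bar> \<le> c"
    and R: "\<forall>y\<in>closure Or. norm y \<le> R" and R0: "R \<ge> 0" and c0: "c \<ge> 0"
    and y: "y \<in> Omrh N Or"
  shows "\<bar>v y\<bar> \<le> c * (2 * R + hN N)"
proof -
  define h where "h = hN N"
  have h0: "h > 0" using hN_pos[OF N] by (simp add: h_def)
  define k where "k = nat \<lfloor>2 * R / h\<rfloor> + 1"
  have "real k = of_int \<lfloor>2 * R / h\<rfloor> + 1" unfolding k_def using R0 h0 by simp
  then have "2 * R / h < real k" "real k \<le> 2 * R / h + 1"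
    using of_int_floor_le[of "2 * R / h"] real_of_int_floor_add_one_gt[of "2 * R / h"] by linarith+
  then have kh: "2 * R < real k * h" "real k * h \<le> 2 * R + h"
    using h0 by (simp_all add: field_simps)
  have "- R \<le> y$i"
    using R y component_le_norm_cart[of y i] unfolding Omrh_def by force
  then have "y$i + real k * hN N > R" using kh by (simp add: h_def)
  then have "\<bar>v y\<bar> \<le> real k * (c * hN N)" using walk_bound[OF N bd dp R c0, of k] y by blast
  also have "\<dots> = c * (real k * h)" by (simp add: h_def)
  also have "\<dots> \<le> c * (2 * R + h)" using kh c0 by (simp add: mult_left_mono)
  finally show ?thesis by (simp add: h_def)
qed

lemma discrete_uniform_error:
  fixes U :: "nat \<Rightarrow> real^'n \<Rightarrow> real" and u :: "real^'n \<Rightarrow> real"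
  assumes b: "bounded Or" and N0: "N0 \<ge> 1"
    and hyp: "\<forall>N\<ge>N0. (\<forall>x\<in>Omrh N Or - Omr0h N Or. U N x = u x) \<and>
         norm1h N Or (\<lambda>y. U N y - u y) \<le> Cs * hN N powr (2 + real CARD('n) / 2)"
  shows "\<exists>M\<ge>0. \<forall>N\<ge>N0. \<forall>y\<in>Omrh N Or. \<bar>U N y - u y\<bar> \<le> M * hN N"
proof -
  obtain R where R0: "R > 0" and R: "\<forall>y\<in>closure Or. norm y \<le> R"
    using bounded_closure[OF b] bounded_pos by blast
  have "\<bar>U N y - u y\<bar> \<le> \<bar>Cs\<bar> * (2 * R + 1) * hN N"
    if NN: "N \<ge> N0" and y: "y \<in> Omrh N Or" for N y
  proof -
    have N: "N > 0" using NN N0 by simp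
    define h where "h = hN N"
    have h0: "h > 0" and h1: "h \<le> 1" using N by (simp_all add: h_def hN_def)
    have dp: "\<forall>z\<in>Omr0h N Or. \<bar>dplus N undefined (\<lambda>y. U N y - u y) z\<bar> \<le> \<bar>Cs\<bar> * h\<^sup>2"
      using dplus_bound[OF N b] hyp NN by (simp add: h_def)
    have bd: "\<forall>x\<in>Omrh N Or - Omr0h N Or. U N x - u x = 0" using hyp NN by simp
    have "\<bar>U N y - u y\<bar> \<le> \<bar>Cs\<bar> * h\<^sup>2 * (2 * R + h)"
      using discrete_sup_bound[OF N bd dp R _ _ y] R0 by (simp add: h_def)
    also have "\<dots> \<le> \<bar>Cs\<bar> * (2 * R + 1) * h"
    proof -
      have "h * (2 * R) \<le> 2 * R" using h0 h1 R0 by (simp add: mult_left_le_one_le)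
      moreover have "h * h \<le> 1" using h0 h1 by (simp add: mult_le_one)
      ultimately have "h * (2 * R + h) \<le> 2 * R + 1" by (simp add: distrib_left)
      then have "(\<bar>Cs\<bar> * h) * (h * (2 * R + h)) \<le> (\<bar>Cs\<bar> * h) * (2 * R + 1)"
        using h0 by (intro mult_left_mono) auto
      then show ?thesis by (simp add: power2_eq_square mult_ac)
    qed
    finally show ?thesis by (simp add: h_def)
  qed
  moreover have "\<bar>Cs\<bar> * (2 * R + 1) \<ge> 0" using R0 by simp
  ultimately show ?thesis by blast
qed

lemma ereal_le_by_eps: "(\<And>e. e > 0 \<Longrightarrow> X \<le> ereal (a + e)) \<Longrightarrow> X \<le> ereal a"
  by (rule ereal_le_epsilon2) simp

lemma ereal_ge_by_eps: "(\<And>e. e > 0 \<Longrightarrow> ereal (a - e) \<le> X) \<Longrightarrow> ereal a \<le> X"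
proof (rule ereal_le_epsilon2)
  fix e :: real assume "\<And>e. e > 0 \<Longrightarrow> ereal (a - e) \<le> X" "e > 0"
  then have "ereal (a - e) + ereal e \<le> X + ereal e" by (intro add_right_mono) blast
  then show "ereal a \<le> X + ereal e" by simp
qed

locale uniformly_close_family =
  fixes A :: "real \<Rightarrow> 'p set" and F :: "'p \<Rightarrow> real" and L :: real
  assumes mono: "\<And>d d'. d \<le> d' \<Longrightarrow> A d \<subseteq> A d'"
    and nonempty: "\<And>d. d > 0 \<Longrightarrow> A d \<noteq> {}"
    and close: "\<And>e. e > 0 \<Longrightarrow> \<exists>d>0. \<forall>p\<in>A d. \<bar>F p - L\<bar> < e"
begin

lemma close_point: "d > 0 \<Longrightarrow> e > 0 \<Longrightarrow> \<exists>p\<in>A d. \<bar>F p - L\<bar> < e"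
proof -
  assume d: "d > 0" and e: "e > 0"
  obtain d0 where d0: "d0 > 0" "\<forall>p\<in>A d0. \<bar>F p - L\<bar> < e" using close[OF e] by blast
  obtain p where "p \<in> A (min d d0)" using nonempty[of "min d d0"] d d0 by auto
  then show ?thesis using mono[of "min d d0" d] mono[of "min d d0" d0] d0(2) by auto
qed

lemma upper_limit: "(INF d\<in>{0<..}. SUP p\<in>A d. ereal (F p)) = ereal L"
proof (rule antisym)
  show "(INF d\<in>{0<..}. SUP p\<in>A d. ereal (F p)) \<le> ereal L"
  proof (rule ereal_le_by_eps)
    fix e :: real assume "e > 0"
    then obtain d where d: "d > 0" "\<forall>p\<in>A d. \<bar>F p - L\<bar> < e" using close by blast
    have "(INF d\<in>{0<..}. SUP p\<in>A d. ereal (F p)) \<le> (SUP p\<in>A d. ereal (F p))"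
      using d(1) by (intro INF_lower) simp
    also have "\<dots> \<le> ereal (L + e)" using d(2) by (intro SUP_least) (auto simp: abs_less_iff)
    finally show "(INF d\<in>{0<..}. SUP p\<in>A d. ereal (F p)) \<le> ereal (L + e)" .
  qed
  show "ereal L \<le> (INF d\<in>{0<..}. SUP p\<in>A d. ereal (F p))"
  proof (rule INF_greatest)
    fix d :: real assume d: "d \<in> {0<..}"
    show "ereal L \<le> (SUP p\<in>A d. ereal (F p))"
    proof (rule ereal_ge_by_eps)
      fix e :: real assume "e > 0"
      then obtain p where p: "p \<in> A d" "\<bar>F p - L\<bar> < e" using close_point d by auto
      then have "ereal (L - e) \<le> ereal (F p)" by (simp add: abs_less_iff)
      also have "\<dots> \<le> (SUP p\<in>A d. ereal (F p))" using p(1) by (rule SUP_upper)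
      finally show "ereal (L - e) \<le> (SUP p\<in>A d. ereal (F p))" .
    qed
  qed
qed

lemma lower_limit: "(SUP d\<in>{0<..}. INF p\<in>A d. ereal (F p)) = ereal L"
proof (rule antisym)
  show "ereal L \<le> (SUP d\<in>{0<..}. INF p\<in>A d. ereal (F p))"
  proof (rule ereal_ge_by_eps)
    fix e :: real assume "e > 0"
    then obtain d where d: "d > 0" "\<forall>p\<in>A d. \<bar>F p - L\<bar> < e" using close by blast
    have "ereal (L - e) \<le> (INF p\<in>A d. ereal (F p))"
      using d(2) by (intro INF_greatest) (auto simp: abs_less_iff)
    also have "\<dots> \<le> (SUP d\<in>{0<..}. INF p\<in>A d. ereal (F p))"
      using d(1) by (intro SUP_upper) simp
    finally show "ereal (L - e) \<le> (SUP d\<in>{0<..}. INF p\<in>A d. ereal (F p))" .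
  qed
  show "(SUP d\<in>{0<..}. INF p\<in>A d. ereal (F p)) \<le> ereal L"
  proof (rule SUP_least)
    fix d :: real assume d: "d \<in> {0<..}"
    show "(INF p\<in>A d. ereal (F p)) \<le> ereal L"
    proof (rule ereal_le_by_eps)
      fix e :: real assume "e > 0"
      then obtain p where p: "p \<in> A d" "\<bar>F p - L\<bar> < e" using close_point d by auto
      have "(INF p\<in>A d. ereal (F p)) \<le> ereal (F p)" using p(1) by (rule INF_lower)
      also have "\<dots> \<le> ereal (L + e)" using p(2) by (simp add: abs_less_iff)
      finally show "(INF p\<in>A d. ereal (F p)) \<le> ereal (L + e)" .
    qed
  qed
qed

end

lemma half_relaxed_limits_eq:
  fixes U :: "nat \<Rightarrow> real^'n \<Rightarrow> real" and u :: "real^'n \<Rightarrow> real"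
  assumes x: "x \<in> Or" and Or_open: "open Or" and Or_sub: "Or \<subseteq> Omega"
    and u_cont: "continuous_on (closure Omega) u" and N0: "N0 \<ge> 1"
    and bound: "\<forall>N\<ge>N0. \<forall>y\<in>Omrh N Or. \<bar>U N y - u y\<bar> \<le> M * hN N" and M0: "M \<ge> 0"
  shows "hrl_upper N0 U x = ereal (u x) \<and> hrl_lower N0 U x = ereal (u x)"
proof -
  define A where "A d = {(N, y). N \<ge> N0 \<and> 0 < N \<and> hN N \<le> d \<and> y \<in> Omh0 N \<and> dist y x \<le> d}"
    for d
  obtain r where r: "r > 0" "ball x r \<subseteq> Or" using Or_open x openE by blast
  have "uniformly_close_family A (\<lambda>p. U (fst p) (snd p)) (u x)"
  proof
    show "A d \<subseteq> A d'" if "d \<le> d'" for d d' using that unfolding A_def by auto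
  next
    fix d :: real assume d: "d > 0"
    define m where "m = min d r"
    have m0: "m > 0" using d r by (simp add: m_def)
    define N where "N = max N0 (nat \<lceil>real CARD('n) / m\<rceil> + 1)"
    have N: "N \<ge> N0" "real CARD('n) / m < real N"
      unfolding N_def using real_nat_ceiling_ge[of "real CARD('n) / m"] by auto
    have N0': "N > 0" using N0 N(1) by simp
    have nm: "real CARD('n) / real N < m" using N(2) m0 N0' by (simp add: field_simps)
    have "hN N \<le> real CARD('n) / real N" using N0' by (simp add: hN_def divide_right_mono)
    then have hN: "hN N \<le> d" using nm by (simp add: m_def)
    obtain y where yg: "y \<in> grid N" and yd: "dist y x \<le> real CARD('n) / real N"
      using grid_point_near[OF N0'] by blast
    then have "y \<in> Or" using r nm by (auto simp: m_def dist_commute)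
    then have "y \<in> Omh0 N" using yg Or_sub unfolding Omh0_def by auto
    then have "(N, y) \<in> A d" using N(1) N0' hN yd nm unfolding A_def m_def by auto
    then show "A d \<noteq> {}" by blast
  next
    fix e :: real assume e: "e > 0"
    have xc: "x \<in> closure Omega" using x Or_sub closure_subset by blast
    obtain \<delta> where \<delta>: "\<delta> > 0" "\<forall>y\<in>closure Omega. dist y x < \<delta> \<longrightarrow> dist (u y) (u x) < e/2"
      using u_cont xc e unfolding continuous_on_iff by (meson half_gt_zero)
    define d0 where "d0 = min (r/2) (min (\<delta>/2) (e / (2 * (M + 1))))"
    have d00: "d0 > 0" using r \<delta> e M0 by (simp add: d0_def)
    have "\<bar>U N y - u x\<bar> < e" if p: "(N, y) \<in> A d0" for N y
    proof -
      have NN: "N \<ge> N0" "hN N \<le> d0" "y \<in> Omh0 N" "dist y x \<le> d0" using p unfolding A_def by auto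
      have yO: "y \<in> Or" using NN(4) r by (auto simp: d0_def dist_commute)
      then have "y \<in> Omrh N Or" using NN(3) closure_subset unfolding Omrh_def Omh0_def by blast
      then have "\<bar>U N y - u y\<bar> \<le> M * hN N" using bound NN(1) by blast
      also have "M * hN N \<le> M * (e / (2 * (M + 1)))"
        using NN(2) M0 by (intro mult_left_mono) (auto simp: d0_def)
      also have "\<dots> < e / 2" using M0 e by (simp add: field_simps)
      finally have "\<bar>U N y - u y\<bar> < e/2" .
      moreover have "dist (u y) (u x) < e/2"
      proof -
        have "y \<in> closure Omega" using yO Or_sub closure_subset by blast
        moreover have "dist y x < \<delta>" using NN(4) \<delta>(1) by (simp add: d0_def)
        ultimately show ?thesis using \<delta>(2) by blast
      qed
      ultimately show ?thesis unfolding dist_real_def by linarith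
    qed
    then show "\<exists>d>0. \<forall>p\<in>A d. \<bar>U (fst p) (snd p) - u x\<bar> < e" using d00 by auto
  qed
  then have "(INF d\<in>{0<..}. SUP p\<in>A d. ereal (U (fst p) (snd p))) = ereal (u x)"
    and "(SUP d\<in>{0<..}. INF p\<in>A d. ereal (U (fst p) (snd p))) = ereal (u x)"
    by (rule uniformly_close_family.upper_limit, rule uniformly_close_family.lower_limit)
  then show ?thesis unfolding hrl_upper_def hrl_lower_def A_def by simp
qed

theorem mainTheorem5:
  fixes f g gt u :: "real^'n \<Rightarrow> real"
    and U :: "nat \<Rightarrow> real^'n \<Rightarrow> real"
    and Or :: "(real^'n) set"
    and N0 :: nat and Cs :: real
  assumes n2: "CARD('n) \<ge> 2"
    and f_cont: "continuous_on (closure Omega) f"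
    and f_pos: "\<forall>x\<in>closure Omega. f x > 0"
    and gt_cont: "continuous_on (closure Omega) gt"
    and gt_convex: "convex_on (closure Omega) gt"
    and gt_ext: "\<forall>x\<in>frontier Omega. gt x = g x"
    and u_cont: "continuous_on (closure Omega) u"
    and u_convex: "convex_on (closure Omega) u"
    and u_visc: "\<forall>x\<in>Omega. MA_visc_sol_at f u x"
    and u_bd: "\<forall>x\<in>frontier Omega. u x = g x"
    and Or_open: "open Or" and Or_bounded: "bounded Or" and Or_convex: "convex Or"
    and Or_sub: "Or \<subseteq> Omega"
    and Or_reg: "\<forall>x\<in>Or. regular_point u x"
    and N0_pos: "N0 \<ge> 1"
    and U_sol: "\<forall>N\<ge>N0.
         (\<forall>x\<in>Omh0 N. Fh N Or f (U N) x = 0) \<and>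
         (\<forall>x\<in>bdh N. U N x = g x) \<and>
         (\<forall>x\<in>Omrh N Or - Omr0h N Or. U N x = u x) \<and>
         norm1h N Or (\<lambda>y. U N y - u y) \<le> Cs * hN N powr (2 + real CARD('n) / 2)"
  shows "\<forall>x\<in>Or.
           hrl_lower N0 U x = ereal (u x) \<and> hrl_upper N0 U x = ereal (u x) \<and>
           MA_visc_sol_at f (\<lambda>y. real_of_ereal (hrl_lower N0 U y)) x \<and>
           cvx_visc_sol_at (\<lambda>y. real_of_ereal (hrl_lower N0 U y)) x \<and>
           MA_visc_sol_at f (\<lambda>y. real_of_ereal (hrl_upper N0 U y)) x \<and>
           cvx_visc_sol_at (\<lambda>y. real_of_ereal (hrl_upper N0 U y)) x"
proof
  fix x assume x: "x \<in> Or"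
  obtain M where M0: "M \<ge> 0" and bound: "\<forall>N\<ge>N0. \<forall>y\<in>Omrh N Or. \<bar>U N y - u y\<bar> \<le> M * hN N"
    using discrete_uniform_error[OF Or_bounded N0_pos] U_sol by blast
  have limits: "hrl_upper N0 U y = ereal (u y) \<and> hrl_lower N0 U y = ereal (u y)" if "y \<in> Or" for y
    using half_relaxed_limits_eq[OF that Or_open Or_sub u_cont N0_pos bound M0] .
  have sol: "MA_visc_sol_at f w x \<and> cvx_visc_sol_at w x" if wu: "\<forall>y\<in>Or. w y = u y" for w
  proof
    show "MA_visc_sol_at f w x"
      using MA_visc_sol_at_local[OF Or_open x wu] u_visc x Or_sub by blast
    obtain \<rho> where "\<rho> > 0" "\<forall>z. norm z < \<rho> \<longrightarrow> 2 * w x \<le> w (x + z) + w (x - z)"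
      using midpoint_convex_near[OF u_convex Or_open _ x wu] Or_sub closure_subset by blast
    then show "cvx_visc_sol_at w x" by (rule cvx_visc_sol_at_midpoint_convex)
  qed
  have lower: "\<forall>y\<in>Or. real_of_ereal (hrl_lower N0 U y) = u y"
    and upper: "\<forall>y\<in>Or. real_of_ereal (hrl_upper N0 U y) = u y" using limits by simp_all
  show "hrl_lower N0 U x = ereal (u x) \<and> hrl_upper N0 U x = ereal (u x) \<and>
           MA_visc_sol_at f (\<lambda>y. real_of_ereal (hrl_lower N0 U y)) x \<and>
           cvx_visc_sol_at (\<lambda>y. real_of_ereal (hrl_lower N0 U y)) x \<and>
           MA_visc_sol_at f (\<lambda>y. real_of_ereal (hrl_upper N0 U y)) x \<and>
           cvx_visc_sol_at (\<lambda>y. real_of_ereal (hrl_upper N0 U y)) x"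
    using limits[OF x] sol[OF lower] sol[OF upper] by blast
qed

end
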